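(* Let $V$ be a finite set of vertices, let $(V,E)$ be the complete undirected graph on $V$, and let $w:E\to\mathbb{R}$ be arbitrary edge weights (write $w_{ij}=w_{ji}=w(\{i,j\})$). Consider the two $0$--$1$ integer linear programs $$\text{(P)}:\quad \max \sum_{\{i,j\}\in E} w_{ij}x_{ij}\ \text{ s.t. } x_{ij}+x_{jk}\le 1+x_{ik}\ \text{for all distinct } i,j,k\in V,\quad x_{ij}\in\{0,1\}\ \text{for all distinct } i,j\in V,$$ $$\text{(FRP)}:\quad \max \sum_{\{i,j\}\in E} w_{ij}x_{ij}\ \text{ s.t. } x_{ij}+x_{jk}\le 1+x_{ik}\ \text{for all distinct } i,j,k\in V \text{ with } w_{ij}+w_{jk}\ge 0,\quad x_{ij}\in\{0,1\}\ \text{for all distinct } i,j\in V.$$ Then the set of optimal solutions of (FRP) coincides with the set of optimal solutions of (P).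
   Context: Variables are indexed by unordered pairs of distinct vertices, i.e. $x_{ij}$ and $x_{ji}$ denote the same variable, one for each edge $\{i,j\}\in E$. The constraints $x_{ij}+x_{jk}\le 1+x_{ik}$ (transitivity constraints) are imposed for every ordered triple of distinct vertices satisfying the stated condition. Problem (P) is the standard formulation of the clique partitioning problem, whose feasible solutions are exactly the incidence vectors of edge sets of vertex partitions of $V$ into cliques. *)

theory Defs
  imports Complex_Main "HOL-Library.FuncSet"
begin

definition edges :: "'a set \<Rightarrow> 'a set set" where
  "edges V = {{i, j} | i j. i \<in> V \<and> j \<in> V \<and> i \<noteq> j}"

(* A candidate solution is a vector indexed by E, i.e. a function on E that is
   (by convention) 0 outside E; x_{ij} is written  x {i,j}. *)
definition binary_vec :: "'a set \<Rightarrow> ('a set \<Rightarrow> real) \<Rightarrow> bool" where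
  "binary_vec V x \<longleftrightarrow> x \<in> extensional (edges V) \<and> (\<forall>e \<in> edges V. x e \<in> {0, 1})"

definition objective :: "'a set \<Rightarrow> ('a set \<Rightarrow> real) \<Rightarrow> ('a set \<Rightarrow> real) \<Rightarrow> real" where
  "objective V w x = (\<Sum>e \<in> edges V. w e * x e)"

definition feasible_P :: "'a set \<Rightarrow> ('a set \<Rightarrow> real) \<Rightarrow> bool" where
  "feasible_P V x \<longleftrightarrow> binary_vec V x \<and>
     (\<forall>i\<in>V. \<forall>j\<in>V. \<forall>k\<in>V. i \<noteq> j \<and> j \<noteq> k \<and> i \<noteq> k \<longrightarrow>
        x {i, j} + x {j, k} \<le> 1 + x {i, k})"

definition feasible_FRP :: "'a set \<Rightarrow> ('a set \<Rightarrow> real) \<Rightarrow> ('a set \<Rightarrow> real) \<Rightarrow> bool" where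
  "feasible_FRP V w x \<longleftrightarrow> binary_vec V x \<and>
     (\<forall>i\<in>V. \<forall>j\<in>V. \<forall>k\<in>V. i \<noteq> j \<and> j \<noteq> k \<and> i \<noteq> k \<and> w {i, j} + w {j, k} \<ge> 0 \<longrightarrow>
        x {i, j} + x {j, k} \<le> 1 + x {i, k})"

definition optimal_solutions :: "(('a set \<Rightarrow> real) \<Rightarrow> bool) \<Rightarrow> (('a set \<Rightarrow> real) \<Rightarrow> real)
    \<Rightarrow> ('a set \<Rightarrow> real) set" where
  "optimal_solutions F f = {x. F x \<and> (\<forall>y. F y \<longrightarrow> f y \<le> f x)}"

end

theory Submission
  imports Defs
begin

(* Let x be FRP-feasible but not P-feasible. Every violated triple (v, u, t), i.e.
   x_vu = x_ut = 1 and x_vt = 0, has w_vu + w_ut < 0, for otherwise (FRP) would impose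
   its constraint. Summing over all violated triples, and noting that the reversal
   (v, u, t) -> (t, u, v) swaps the two terms, the total of w_ut is negative; grouping
   by v, some v has a negative total. For this v and N = {v} \<union> {u. x_vu = 1}, the pairs
   (u, t) of violated triples starting in v are exactly the x-edges leaving N. So
   setting x to 0 on the cut of N keeps every constraint of (FRP), strictly increases
   the objective and removes edges. Iterating, every FRP-feasible vector is dominated
   by a P-feasible one, and FRP-optimal vectors are P-feasible. *)

lemma doubleton_in_edges_iff: "{i, j} \<in> edges V \<longleftrightarrow> i \<in> V \<and> j \<in> V \<and> i \<noteq> j"
  unfolding edges_def by (auto simp: doubleton_eq_iff)

lemma finite_edges: "finite V \<Longrightarrow> finite (edges V)"
  by (rule finite_subset[of _ "Pow V"]) (auto simp: edges_def)

lemma binary_vec_doubleton: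
  "binary_vec V x \<Longrightarrow> i \<in> V \<Longrightarrow> j \<in> V \<Longrightarrow> i \<noteq> j \<Longrightarrow> x {i, j} \<in> {0, 1}"
  unfolding binary_vec_def by (simp add: doubleton_in_edges_iff)

definition cut_edges :: "'a set \<Rightarrow> 'a set \<Rightarrow> 'a set set" where
  "cut_edges V S = {{u, t} | u t. u \<in> S \<and> t \<in> V - S}"

lemma doubleton_in_cut_edges_iff:
  "{a, b} \<in> cut_edges V S \<longleftrightarrow> a \<in> S \<and> b \<in> V - S \<or> b \<in> S \<and> a \<in> V - S"
  unfolding cut_edges_def by (auto simp: doubleton_eq_iff)

lemma cut_edges_subset_edges: "S \<subseteq> V \<Longrightarrow> cut_edges V S \<subseteq> edges V"
  unfolding cut_edges_def edges_def by blast

lemma sum_cut_edges: "sum f (cut_edges V S) = (\<Sum>(u, t)\<in>S \<times> (V - S). f {u, t})"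
proof -
  have "inj_on (\<lambda>(u, t). {u, t}) (S \<times> (V - S))"
    by (auto simp: inj_on_def doubleton_eq_iff)
  moreover have "cut_edges V S = (\<lambda>(u, t). {u, t}) ` (S \<times> (V - S))"
    by (auto simp: cut_edges_def)
  ultimately show ?thesis
    by (simp add: sum.reindex case_prod_unfold comp_def)
qed

definition cut_off :: "'a set \<Rightarrow> 'a set \<Rightarrow> ('a set \<Rightarrow> real) \<Rightarrow> 'a set \<Rightarrow> real" where
  "cut_off V S x e = (if e \<in> cut_edges V S then 0 else x e)"

lemma binary_vec_cut_off:
  assumes "S \<subseteq> V" "binary_vec V x"
  shows "binary_vec V (cut_off V S x)"
proof -
  have "x \<in> extensional (edges V)"
    using assms(2) by (simp add: binary_vec_def)
  then have "cut_off V S x e = undefined" if "e \<notin> edges V" for e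
    using that cut_edges_subset_edges[OF assms(1)] extensional_arb[of x "edges V" e]
    by (auto simp: cut_off_def)
  then have "cut_off V S x \<in> extensional (edges V)"
    by (simp add: extensional_def)
  moreover have "\<forall>e\<in>edges V. cut_off V S x e \<in> {0, 1}"
    using assms(2) by (simp add: binary_vec_def cut_off_def)
  ultimately show ?thesis
    by (simp add: binary_vec_def)
qed

lemma cut_off_preserves_triangle:
  assumes "binary_vec V x" and "i \<in> V" "j \<in> V" "k \<in> V" "i \<noteq> j" "j \<noteq> k" "i \<noteq> k"
    and "x {i, j} + x {j, k} \<le> 1 + x {i, k}"
  shows "cut_off V S x {i, j} + cut_off V S x {j, k} \<le> 1 + cut_off V S x {i, k}"
proof -
  let ?y = "cut_off V S x"
  have binary: "x {i, j} \<in> {0, 1}" "x {j, k} \<in> {0, 1}" "x {i, k} \<in> {0, 1}"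
    using binary_vec_doubleton[OF assms(1)] assms(2-7) by blast+
  then have y_binary: "?y {i, j} \<in> {0, 1}" "?y {j, k} \<in> {0, 1}" "?y {i, k} \<in> {0, 1}"
    by (simp_all add: cut_off_def)
  then consider "?y {i, j} = 1" "?y {j, k} = 1" | "?y {i, j} = 0" | "?y {j, k} = 0"
    by blast
  then show ?thesis
  proof cases
    case 1
    then have uncut: "{i, j} \<notin> cut_edges V S" "{j, k} \<notin> cut_edges V S"
      by (auto simp: cut_off_def split: if_splits)
    then have "{i, k} \<notin> cut_edges V S"
      using assms(2-4) unfolding doubleton_in_cut_edges_iff by blast
    moreover have "x {i, j} = 1" "x {j, k} = 1"
      using 1 uncut by (simp_all add: cut_off_def)
    then have "x {i, k} = 1"
      using assms(8) binary(3) by auto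
    ultimately show ?thesis
      using 1 by (simp add: cut_off_def)
  qed (use y_binary in auto)
qed

lemma feasible_FRP_cut_off:
  assumes "S \<subseteq> V" "feasible_FRP V w x"
  shows "feasible_FRP V w (cut_off V S x)"
  unfolding feasible_FRP_def
proof (intro conjI ballI impI)
  have binary: "binary_vec V x"
    using assms(2) by (simp add: feasible_FRP_def)
  then show "binary_vec V (cut_off V S x)"
    by (rule binary_vec_cut_off[OF assms(1)])
  fix i j k
  assume ijk: "i \<in> V" "j \<in> V" "k \<in> V"
    and constrained: "i \<noteq> j \<and> j \<noteq> k \<and> i \<noteq> k \<and> w {i, j} + w {j, k} \<ge> 0"
  then have "x {i, j} + x {j, k} \<le> 1 + x {i, k}"
    using assms(2) unfolding feasible_FRP_def by blast
  then show "cut_off V S x {i, j} + cut_off V S x {j, k} \<le> 1 + cut_off V S x {i, k}"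
    using cut_off_preserves_triangle[OF binary ijk] constrained by blast
qed

lemma objective_cut_off:
  assumes "finite V" "S \<subseteq> V"
  shows "objective V w x = objective V w (cut_off V S x) + (\<Sum>e\<in>cut_edges V S. w e * x e)"
proof -
  have "objective V w x
      = (\<Sum>e\<in>edges V. w e * cut_off V S x e + (if e \<in> cut_edges V S then w e * x e else 0))"
    unfolding objective_def by (rule sum.cong) (auto simp: cut_off_def)
  also have "\<dots> = objective V w (cut_off V S x) + (\<Sum>e\<in>edges V \<inter> cut_edges V S. w e * x e)"
    by (simp add: sum.distrib objective_def sum.inter_restrict finite_edges assms(1))
  also have "edges V \<inter> cut_edges V S = cut_edges V S"
    using cut_edges_subset_edges[OF assms(2)] by blast
  finally show ?thesis .
qed

lemma card_ones_cut_off: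
  assumes "finite V" "S \<subseteq> V" "e \<in> cut_edges V S" "x e = 1"
  shows "card {e \<in> edges V. cut_off V S x e = 1} < card {e \<in> edges V. x e = 1}"
proof (rule psubset_card_mono)
  show "finite {e \<in> edges V. x e = 1}"
    using finite_edges[OF assms(1)] by simp
  have "e \<in> edges V"
    using assms(2,3) cut_edges_subset_edges by blast
  then show "{e \<in> edges V. cut_off V S x e = 1} \<subset> {e \<in> edges V. x e = 1}"
    using assms(3,4) by (auto simp: cut_off_def split: if_splits)
qed

definition violated_triples :: "'a set \<Rightarrow> ('a set \<Rightarrow> real) \<Rightarrow> ('a \<times> 'a \<times> 'a) set" where
  "violated_triples V x = {(v, u, t). v \<in> V \<and> u \<in> V \<and> t \<in> V \<and> v \<noteq> u \<and> u \<noteq> t \<and> v \<noteq> t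
      \<and> x {v, u} = 1 \<and> x {u, t} = 1 \<and> x {v, t} \<noteq> 1}"

definition closed_neighbourhood :: "'a set \<Rightarrow> ('a set \<Rightarrow> real) \<Rightarrow> 'a \<Rightarrow> 'a set" where
  "closed_neighbourhood V x v = {u \<in> V. u = v \<or> x {v, u} = 1}"

lemma finite_violated_triples: "finite V \<Longrightarrow> finite (violated_triples V x)"
  by (rule finite_subset[of _ "V \<times> V \<times> V"]) (auto simp: violated_triples_def)

lemma violated_triples_nonempty:
  assumes "binary_vec V x" "\<not> feasible_P V x"
  shows "violated_triples V x \<noteq> {}"
proof -
  obtain i j k where ijk: "i \<in> V" "j \<in> V" "k \<in> V" "i \<noteq> j" "j \<noteq> k" "i \<noteq> k"
    and violated: "\<not> x {i, j} + x {j, k} \<le> 1 + x {i, k}"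
    using assms unfolding feasible_P_def by blast
  have "x {i, j} \<in> {0, 1}" "x {j, k} \<in> {0, 1}" "x {i, k} \<in> {0, 1}"
    using binary_vec_doubleton[OF assms(1)] ijk by blast+
  then have "(i, j, k) \<in> violated_triples V x"
    using ijk violated by (auto simp: violated_triples_def)
  then show ?thesis by blast
qed

lemma violated_triple_weight_neg:
  assumes "feasible_FRP V w x" "(v, u, t) \<in> violated_triples V x"
  shows "w {v, u} + w {u, t} < 0"
proof (rule ccontr)
  have binary: "binary_vec V x"
    using assms(1) by (simp add: feasible_FRP_def)
  assume "\<not> w {v, u} + w {u, t} < 0"
  then have "0 \<le> w {v, u} + w {u, t}"
    by simp
  moreover have "v \<in> V" "u \<in> V" "t \<in> V" "v \<noteq> u" "u \<noteq> t" "v \<noteq> t"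
    using assms(2) by (simp_all add: violated_triples_def)
  ultimately have "x {v, u} + x {u, t} \<le> 1 + x {v, t}"
    using assms(1) unfolding feasible_FRP_def by blast
  moreover have "x {v, t} \<in> {0, 1}"
    using binary \<open>v \<in> V\<close> \<open>t \<in> V\<close> \<open>v \<noteq> t\<close> by (rule binary_vec_doubleton)
  ultimately show False
    using assms(2) by (auto simp: violated_triples_def)
qed

lemma sum_violated_triples_reverse:
  "(\<Sum>(v, u, t)\<in>violated_triples V x. w {v, u}) = (\<Sum>(v, u, t)\<in>violated_triples V x. w {u, t})"
  by (rule sum.reindex_bij_witness[of _ "\<lambda>(v, u, t). (t, u, v)" "\<lambda>(v, u, t). (t, u, v)"])
    (auto simp: violated_triples_def insert_commute)

lemma violated_triples_from_eq:
  fixes x :: "'a set \<Rightarrow> real"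
  assumes "v \<in> V"
  defines "N \<equiv> closed_neighbourhood V x v"
  shows "{(u, t). (v, u, t) \<in> violated_triples V x} = {(u, t) \<in> N \<times> (V - N). x {u, t} = 1}"
  using assms by (auto simp: violated_triples_def closed_neighbourhood_def)

lemma sum_violated_triples_from:
  fixes x :: "'a set \<Rightarrow> real"
  assumes "finite V" "binary_vec V x" "v \<in> V"
  defines "N \<equiv> closed_neighbourhood V x v"
  shows "(\<Sum>(u, t)\<in>{(u, t). (v, u, t) \<in> violated_triples V x}. w {u, t}) = (\<Sum>e\<in>cut_edges V N. w e * x e)"
proof -
  have N: "N \<subseteq> V"
    by (auto simp: N_def closed_neighbourhood_def)
  have binary: "x {u, t} \<in> {0, 1}" if "(u, t) \<in> N \<times> (V - N)" for u t
    using that N binary_vec_doubleton[OF assms(2)] by blast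
  have "(\<Sum>(u, t)\<in>{(u, t). (v, u, t) \<in> violated_triples V x}. w {u, t})
      = (\<Sum>(u, t)\<in>N \<times> (V - N). w {u, t} * x {u, t})"
    unfolding violated_triples_from_eq[OF assms(3)] N_def[symmetric]
  proof (rule sum.mono_neutral_cong_left)
    show "finite (N \<times> (V - N))"
      using assms(1) N by (simp add: finite_subset)
    show "\<forall>p\<in>N \<times> (V - N) - {(u, t) \<in> N \<times> (V - N). x {u, t} = 1}.
        (\<lambda>(u, t). w {u, t} * x {u, t}) p = 0"
      using binary by fastforce
  qed auto
  also have "\<dots> = (\<Sum>e\<in>cut_edges V N. w e * x e)"
    by (simp add: sum_cut_edges)
  finally show ?thesis .
qed

lemma exists_negative_cut:
  assumes "finite V" "feasible_FRP V w x" "\<not> feasible_P V x"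
  shows "\<exists>v\<in>V. (\<Sum>e\<in>cut_edges V (closed_neighbourhood V x v). w e * x e) < 0"
proof -
  let ?T = "violated_triples V x"
  let ?T_from = "\<lambda>v. {(u, t). (v, u, t) \<in> ?T}"
  have binary: "binary_vec V x"
    using assms(2) by (simp add: feasible_FRP_def)
  have "(\<Sum>(v, u, t)\<in>?T. w {v, u} + w {u, t}) < (\<Sum>(v, u, t)\<in>?T. 0)"
    using finite_violated_triples[OF assms(1)] violated_triples_nonempty[OF binary assms(3)]
    by (rule sum_strict_mono) (use violated_triple_weight_neg[OF assms(2)] in auto)
  then have negative: "(\<Sum>(v, u, t)\<in>?T. w {u, t}) < 0"
    using sum_violated_triples_reverse[of w V x]
    by (simp add: sum.distrib case_prod_unfold)
  have T_from_finite: "finite (?T_from v)" for v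
    by (rule finite_subset[of _ "V \<times> V"]) (auto simp: violated_triples_def assms(1))
  have T_Sigma: "Sigma V ?T_from = ?T"
    by (auto simp: violated_triples_def)
  have "(\<Sum>v\<in>V. \<Sum>e\<in>cut_edges V (closed_neighbourhood V x v). w e * x e)
      = (\<Sum>v\<in>V. \<Sum>(u, t)\<in>?T_from v. w {u, t})"
    using sum_violated_triples_from[OF assms(1) binary] by simp
  also have "\<dots> = (\<Sum>(v, u, t)\<in>Sigma V ?T_from. w {u, t})"
    using T_from_finite by (intro sum.Sigma assms(1) ballI)
  also have "\<dots> < 0"
    unfolding T_Sigma by (rule negative)
  finally show ?thesis
    by (meson not_less sum_nonneg)
qed

lemma feasible_FRP_improvement:
  assumes "finite V" "feasible_FRP V w x" "\<not> feasible_P V x"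
  obtains y where "feasible_FRP V w y" "objective V w x < objective V w y"
    "card {e \<in> edges V. y e = 1} < card {e \<in> edges V. x e = 1}"
proof -
  obtain v where negative_at_v: "(\<Sum>e\<in>cut_edges V (closed_neighbourhood V x v). w e * x e) < 0"
    using exists_negative_cut[OF assms] by blast
  define N where "N = closed_neighbourhood V x v"
  have N: "N \<subseteq> V"
    by (auto simp: N_def closed_neighbourhood_def)
  have negative: "(\<Sum>e\<in>cut_edges V N. w e * x e) < 0"
    using negative_at_v unfolding N_def .
  have "\<exists>e\<in>cut_edges V N. w e * x e \<noteq> 0"
  proof (rule ccontr)
    assume "\<not> (\<exists>e\<in>cut_edges V N. w e * x e \<noteq> 0)"
    then have "(\<Sum>e\<in>cut_edges V N. w e * x e) = 0"
      by (intro sum.neutral) blast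
    with negative show False
      by simp
  qed
  then obtain e where e: "e \<in> cut_edges V N" "w e * x e \<noteq> 0"
    by blast
  then have "e \<in> edges V"
    using cut_edges_subset_edges[OF N] by blast
  then have "x e \<in> {0, 1}"
    using assms(2) by (simp add: feasible_FRP_def binary_vec_def)
  with e(2) have "x e = 1"
    by auto
  show ?thesis
  proof
    show "feasible_FRP V w (cut_off V N x)"
      using feasible_FRP_cut_off[OF N assms(2)] .
    show "objective V w x < objective V w (cut_off V N x)"
      using objective_cut_off[OF assms(1) N, of w x] negative by simp
    show "card {e \<in> edges V. cut_off V N x e = 1} < card {e \<in> edges V. x e = 1}"
      using card_ones_cut_off[where x = x, OF assms(1) N e(1) \<open>x e = 1\<close>] .
  qed
qed

lemma feasible_FRP_dominated_by_feasible_P: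
  "finite V \<Longrightarrow> feasible_FRP V w x \<Longrightarrow> \<exists>z. feasible_P V z \<and> objective V w x \<le> objective V w z"
proof (induction "card {e \<in> edges V. x e = 1}" arbitrary: x rule: less_induct)
  case less
  show ?case
  proof (cases "feasible_P V x")
    case False
    obtain y where y: "feasible_FRP V w y" "objective V w x < objective V w y"
      "card {e \<in> edges V. y e = 1} < card {e \<in> edges V. x e = 1}"
      using feasible_FRP_improvement[OF less.prems False] .
    then show ?thesis
      using less.hyps[OF y(3) less.prems(1) y(1)] by force
  qed blast
qed

lemma optimal_solutions_eq_if_dominated:
  assumes subset: "\<And>x. G x \<Longrightarrow> F x"
    and improvement: "\<And>x. F x \<Longrightarrow> \<not> G x \<Longrightarrow> \<exists>y. F y \<and> f x < f y"
    and dominated: "\<And>x. F x \<Longrightarrow> \<exists>z. G z \<and> f x \<le> f z"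
  shows "optimal_solutions F f = optimal_solutions G f"
proof (intro set_eqI iffI)
  fix x
  assume "x \<in> optimal_solutions F f"
  then have "F x" and maximal: "\<And>y. F y \<Longrightarrow> f y \<le> f x"
    by (auto simp: optimal_solutions_def)
  have "G x"
  proof (rule ccontr)
    assume "\<not> G x"
    then obtain y where "F y" "f x < f y"
      using improvement \<open>F x\<close> by blast
    with maximal show False
      by fastforce
  qed
  then show "x \<in> optimal_solutions G f"
    using maximal subset by (auto simp: optimal_solutions_def)
next
  fix x
  assume "x \<in> optimal_solutions G f"
  then have "G x" and maximal: "\<And>z. G z \<Longrightarrow> f z \<le> f x"
    by (auto simp: optimal_solutions_def)
  have "f y \<le> f x" if "F y" for y
    using dominated[OF that] maximal order_trans by blast
  then show "x \<in> optimal_solutions F f"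
    using \<open>G x\<close> subset by (auto simp: optimal_solutions_def)
qed

theorem theorem1:
  fixes V :: "'a set" and w :: "'a set \<Rightarrow> real"
  assumes "finite V"
  shows "optimal_solutions (feasible_FRP V w) (objective V w)
       = optimal_solutions (feasible_P V) (objective V w)"
proof (rule optimal_solutions_eq_if_dominated)
  show "feasible_FRP V w x" if "feasible_P V x" for x
    using that unfolding feasible_P_def feasible_FRP_def by blast
  show "\<exists>y. feasible_FRP V w y \<and> objective V w x < objective V w y"
    if "feasible_FRP V w x" "\<not> feasible_P V x" for x
    by (rule feasible_FRP_improvement[OF assms that]) blast
  show "\<exists>z. feasible_P V z \<and> objective V w x \<le> objective V w z" if "feasible_FRP V w x" for x
    using feasible_FRP_dominated_by_feasible_P[OF assms that] .
qed

end
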